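(* There is a constant $C>0$ such that the following holds. For a positive integer $l$, set $\epsilon=2^{-2l}$, $N=\lceil 5.34\ln(4l\cdot 2^{2l})\rceil$, and $n=2N(2^l-1)$ (the total number of uses of $U_\theta$). For every $\theta\in[0,1)$, let $\hat\theta$ be the estimate produced by the following procedure: for $k=1,\dots,l$ let $N_{x,k}\sim\mathrm{Bin}\big(N,(1+\cos(2\pi 2^{k-1}\theta))/2\big)$, $N_{y,k}\sim\mathrm{Bin}\big(N,(1+\sin(2\pi 2^{k-1}\theta))/2\big)$, all independent; $t_k=\frac{1}{2\pi}\big(\mathrm{atan2}(2N_{y,k}/N-1,2N_{x,k}/N-1)\big)_{\mathrm{mod}\,2\pi}$, $x(k)=(t_k-1/6)_{\mathrm{mod}\,1}$; $z(1)=x(1)$ and for $k=1,\dots,l-1$, with $d_k=(x(k+1)-2z(k))_{\mathrm{mod}\,1}$: $z(k+1)=2z(k)+d_k$ if $d_k\in[0,1/3)$, $2z(k)+1/3$ if $d_k\in[1/3,2/3)$, $2z(k)$ if $d_k\in[2/3,1)$; finally $\hat\theta=\big((z(l)+1/6)/2^{l-1}\big)_{\mathrm{mod}\,1}$. Then $$1-\mathbb{E}\big[F(U_{\hat\theta},U_\theta)\big]\le C\Big(\frac{\ln n}{n}\Big)^2 .$$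
   Context: $U_\theta=\mathrm{diag}(1,e^{i2\pi\theta})$ for $\theta\in[0,1)$, and the fidelity is $F(U_{\hat\theta},U_\theta)=|\mathrm{tr}(U_{\hat\theta}^{-1}U_\theta)|^2/4$. The binomial counts model, at stage $k$, $N$ measurements each with the POVMs $\{|\psi_x\rangle\langle\psi_x|,\mathbb{I}-|\psi_x\rangle\langle\psi_x|\}$ and $\{|\psi_y\rangle\langle\psi_y|,\mathbb{I}-|\psi_y\rangle\langle\psi_y|\}$ ($|\psi_x\rangle=(|0\rangle+|1\rangle)/\sqrt2$, $|\psi_y\rangle=(|0\rangle+i|1\rangle)/\sqrt2$) of $U_\theta^{2^{k-1}}|\psi_x\rangle$. $(a)_{\mathrm{mod}\,c}$ is the representative of $a$ in $[0,c)$; $\mathrm{atan2}$ is the polar angle (any fixed convention at $(0,0)$). The expectation is over the measurement outcomes; $C$ does not depend on $\theta$ or $l$. *)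

theory Defs
  imports "HOL-Analysis.Analysis" "HOL-Probability.Probability"
begin

definition rmod :: "real \<Rightarrow> real \<Rightarrow> real" where
  "rmod a c = a - c * of_int \<lfloor>a / c\<rfloor>"

text \<open>Polar angle of the point (x,y); angle in [0,2pi); convention at (0,0): 0.\<close>
definition atan2 :: "real \<Rightarrow> real \<Rightarrow> real" where
  "atan2 y x = Arg2pi (Complex x y)"

definition Umat :: "real \<Rightarrow> complex^2^2" where
  "Umat \<theta> = (\<chi> i j. if i = j then (if i = 0 then 1 else cis (2 * pi * \<theta>)) else 0)"

definition fidelity :: "complex^2^2 \<Rightarrow> complex^2^2 \<Rightarrow> real" where
  "fidelity V W = (cmod (trace (matrix_inv V ** W)))\<^sup>2 / 4"

definition Nmeas :: "nat \<Rightarrow> nat" where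
  "Nmeas l = nat \<lceil>(534 / 100) * ln (4 * real l * 2 ^ (2 * l))\<rceil>"

definition nuses :: "nat \<Rightarrow> nat" where
  "nuses l = 2 * Nmeas l * (2 ^ l - 1)"

definition tval :: "nat \<Rightarrow> nat \<Rightarrow> nat \<Rightarrow> real" where
  "tval N nx ny = rmod (atan2 (2 * real ny / real N - 1) (2 * real nx / real N - 1)) (2 * pi) / (2 * pi)"

text \<open>zrec x j = z(j+1).\<close>
fun zrec :: "(nat \<Rightarrow> real) \<Rightarrow> nat \<Rightarrow> real" where
  "zrec x 0 = x 1"
| "zrec x (Suc j) =
     (let d = rmod (x (j + 2) - 2 * zrec x j) 1 in
      if d < 1/3 then 2 * zrec x j + d
      else if d < 2/3 then 2 * zrec x j + 1/3
      else 2 * zrec x j)"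

definition theta_hat :: "nat \<Rightarrow> nat \<Rightarrow> (nat \<Rightarrow> nat) \<Rightarrow> (nat \<Rightarrow> nat) \<Rightarrow> real" where
  "theta_hat l N Nx Ny =
     (let x = (\<lambda>k. rmod (tval N (Nx k) (Ny k) - 1/6) 1)
      in rmod ((zrec x (l - 1) + 1/6) / 2 ^ (l - 1)) 1)"

definition counts_pmf :: "nat \<Rightarrow> nat \<Rightarrow> real \<Rightarrow> ((nat \<Rightarrow> nat) \<times> (nat \<Rightarrow> nat)) pmf" where
  "counts_pmf l N \<theta> =
     pair_pmf
       (Pi_pmf {1..l} 0 (\<lambda>k. binomial_pmf N ((1 + cos (2 * pi * 2 ^ (k - 1) * \<theta>)) / 2)))
       (Pi_pmf {1..l} 0 (\<lambda>k. binomial_pmf N ((1 + sin (2 * pi * 2 ^ (k - 1) * \<theta>)) / 2)))"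

end

theory Submission
  imports Defs
begin

text \<open>
  Call the counts accurate when every empirical frequency is within \<open>\<surd>(3/32)\<close> of its mean.
  Then the point \<open>(2 N_x/N - 1, 2 N_y/N - 1)\<close> is within \<open>\<surd>3/2\<close> of \<open>exp (i \<phi>)\<close> with
  \<open>\<phi> = 2\<pi> 2^(k-1) \<theta>\<close>, so its polar angle is within \<open>\<pi>/3\<close> of \<open>\<phi>\<close>, i.e. every \<open>t_k\<close> is within
  \<open>1/6\<close> of \<open>2^(k-1) \<theta>\<close> modulo 1. Under this hypothesis the recursion keeps \<open>z(k)\<close> within
  \<open>1/6\<close> of \<open>2^(k-1) \<theta> - 1/6\<close> modulo \<open>2^(k-1)\<close>, hence \<open>\<theta>\<^sup>^\<close> is within \<open>1/(6 \<cdot> 2^(l-1))\<close> of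
  \<open>\<theta>\<close> modulo 1 and the infidelity \<open>sin\<^sup>2 (\<pi> (\<theta>\<^sup>^ - \<theta>))\<close> is at most \<open>\<pi>\<^sup>2/(9 \<cdot> 4^l)\<close>.
  By Hoeffding's inequality the counts are inaccurate with probability at most
  \<open>4 l exp (-3N/16) \<le> 4^-l\<close>. Finally \<open>n \<le> 70 l 2^l\<close> and \<open>ln n \<ge> 2l/3\<close>, so
  \<open>4^-l = O ((ln n / n)\<^sup>2)\<close>.
\<close>

lemma matrix_inv_eq:
  fixes A :: "'a::semiring_1^'n^'n"
  assumes "A ** B = mat 1" "B ** A = mat 1"
  shows "matrix_inv A = B"
proof -
  define B' where "B' = matrix_inv A"
  have B': "A ** B' = mat 1 \<and> B' ** A = mat 1"
    unfolding B'_def matrix_inv_def by (rule someI[of _ B]) (use assms in blast)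
  have "B' = B' ** (A ** B)"
    using assms by (simp add: matrix_mul_rid)
  also have "\<dots> = (B' ** A) ** B"
    by (simp add: matrix_mul_assoc)
  also have "\<dots> = B"
    using B' by (simp add: matrix_mul_lid)
  finally show ?thesis unfolding B'_def .
qed

lemma Umat_mult: "Umat a ** Umat b = Umat (a + b)"
  unfolding Umat_def
  by (simp add: matrix_matrix_mult_def vec_eq_iff sum_2 cis_mult[symmetric] algebra_simps
      ; metis exhaust_2 one_neq_zero)

lemma Umat_0: "Umat 0 = mat 1"
  unfolding Umat_def mat_def by (simp add: vec_eq_iff)

lemma matrix_inv_Umat: "matrix_inv (Umat a) = Umat (- a)"
  by (rule matrix_inv_eq) (simp_all add: Umat_mult Umat_0)

lemma cmod_1_plus_cis_squared: "(cmod (1 + cis x))\<^sup>2 = 4 * (cos (x / 2))\<^sup>2"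
proof -
  have "(cmod (1 + cis x))\<^sup>2 = (1 + cos x)\<^sup>2 + (sin x)\<^sup>2"
    by (simp add: cmod_power2)
  also have "\<dots> = 2 + 2 * cos x"
    using sin_cos_squared_add[of x] by (simp add: power2_eq_square algebra_simps)
  also have "\<dots> = 4 * (cos (x / 2))\<^sup>2"
    using cos_double_cos[of "x / 2"] by simp
  finally show ?thesis .
qed

lemma fidelity_Umat: "fidelity (Umat a) (Umat b) = (cos (pi * (b - a)))\<^sup>2"
proof -
  have "trace (matrix_inv (Umat a) ** Umat b) = 1 + cis (2 * pi * (b - a))"
    unfolding matrix_inv_Umat Umat_mult trace_def by (simp add: sum_2 Umat_def mult.commute)
  then show ?thesis
    unfolding fidelity_def using cmod_1_plus_cis_squared[of "2 * pi * (b - a)"] by simp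
qed

lemma fidelity_Umat_bounds: "0 \<le> fidelity (Umat a) (Umat b) \<and> fidelity (Umat a) (Umat b) \<le> 1"
  by (simp add: fidelity_Umat abs_square_le_1)

lemma sin_squared_add_int_pi: "(sin (x + of_int k * pi))\<^sup>2 = (sin x)\<^sup>2"
proof -
  have s: "sin (of_int k * pi) = 0"
    using sin_zero_iff_int2 by blast
  then have "(cos (of_int k * pi))\<^sup>2 = 1"
    using sin_cos_squared_add[of "of_int k * pi"] by simp
  with s show ?thesis
    by (simp add: sin_add power_mult_distrib)
qed

lemma one_minus_fidelity_Umat_le:
  assumes "a = b + \<delta> + of_int k"
  shows "1 - fidelity (Umat a) (Umat b) \<le> (pi * \<delta>)\<^sup>2"
proof -
  have "1 - fidelity (Umat a) (Umat b) = (sin (pi * (b - a)))\<^sup>2"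
    unfolding fidelity_Umat using sin_cos_squared_add[of "pi * (b - a)"] by linarith
  also have "pi * (b - a) = - (pi * \<delta>) + of_int (- k) * pi"
    using assms by (simp add: algebra_simps)
  also have "(sin (- (pi * \<delta>) + of_int (- k) * pi))\<^sup>2 = (sin (pi * \<delta>))\<^sup>2"
    by (simp only: sin_squared_add_int_pi) simp
  also have "\<dots> \<le> (pi * \<delta>)\<^sup>2"
    using abs_sin_x_le_abs_x[of "pi * \<delta>"] by (metis abs_ge_zero power2_abs power_mono)
  finally show ?thesis .
qed

definition near_mod1 :: "real \<Rightarrow> real \<Rightarrow> real \<Rightarrow> bool" where
  "near_mod1 r a b \<longleftrightarrow> (\<exists>e k. \<bar>e\<bar> < r \<and> a = b + e + of_int k)"

lemma near_mod1_rmod_shift: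
  assumes "near_mod1 r a b"
  shows "near_mod1 r (rmod (a - c) 1) (b - c)"
proof -
  obtain e k where ek: "\<bar>e\<bar> < r" "a = b + e + of_int k"
    using assms unfolding near_mod1_def by blast
  then have "rmod (a - c) 1 = (b - c) + e + of_int (k - \<lfloor>a - c\<rfloor>)"
    unfolding rmod_def by simp
  with ek(1) show ?thesis
    unfolding near_mod1_def by blast
qed

lemma rmod_div: "c > 0 \<Longrightarrow> rmod a c / c = rmod (a / c) 1"
  unfolding rmod_def by (simp add: field_simps)

lemma rmod_1_add_int:
  assumes "-1 \<le> v" "v < 1"
  shows "rmod (v + of_int k) 1 = (if v < 0 then v + 1 else v)"
proof -
  have "\<lfloor>v\<rfloor> = (if v < 0 then -1 else 0)"
    using assms by (simp add: floor_eq_iff)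
  then show ?thesis
    unfolding rmod_def by auto
qed

text \<open>
  If \<open>zrec x j = 2^j \<theta> - 1/6 + \<epsilon>\<close> modulo \<open>2^j\<close> and \<open>x (j + 2) = 2^(j+1) \<theta> - 1/6 + e\<close> modulo 1,
  the correction \<open>d\<close> is \<open>v = 1/6 + e - 2\<epsilon> \<in> (-1/3, 2/3)\<close> modulo 1, and the three branches of
  the recursion produce the new errors \<open>2\<epsilon> - 1/6\<close>, \<open>e\<close>, \<open>2\<epsilon> + 1/6\<close>, all of size at most \<open>1/6\<close>.
\<close>
lemma zrec_error:
  assumes "\<And>k. 1 \<le> k \<Longrightarrow> k \<le> Suc j \<Longrightarrow> near_mod1 (1/6) (x k) (2^(k-1) * \<theta> - 1/6)"
  shows "\<exists>\<epsilon> (m::int). \<bar>\<epsilon>\<bar> \<le> 1/6 \<and> zrec x j = 2^j * \<theta> - 1/6 + \<epsilon> + 2^j * of_int m"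
  using assms
proof (induction j)
  case 0
  then obtain e k where "\<bar>e\<bar> < 1/6" "x 1 = \<theta> - 1/6 + e + of_int k"
    unfolding near_mod1_def by fastforce
  then show ?case
    by (intro exI[of _ e] exI[of _ k]) auto
next
  case (Suc j)
  obtain \<epsilon> m where \<epsilon>: "\<bar>\<epsilon>\<bar> \<le> 1/6" and z: "zrec x j = 2^j * \<theta> - 1/6 + \<epsilon> + 2^j * of_int m"
    using Suc by fastforce
  obtain e k where e: "\<bar>e\<bar> < 1/6" and x: "x (j + 2) = 2^(Suc j) * \<theta> - 1/6 + e + of_int k"
    using Suc.prems[of "Suc (Suc j)"] unfolding near_mod1_def by auto
  define v where "v = 1/6 + e - 2 * \<epsilon>"
  have "x (j + 2) - 2 * zrec x j = v + of_int (k - 2 * 2^j * m)"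
    unfolding x z v_def by (simp add: algebra_simps)
  also have "rmod \<dots> 1 = (if v < 0 then v + 1 else v)"
    by (rule rmod_1_add_int) (use \<epsilon> e in \<open>auto simp: v_def\<close>)
  finally have d: "rmod (x (j + 2) - 2 * zrec x j) 1 = (if v < 0 then v + 1 else v)" .
  have bounds: "-1/6 < e" "e < 1/6" "-1/6 \<le> \<epsilon>" "\<epsilon> \<le> 1/6"
    using \<epsilon> e by auto
  have step: "zrec x (Suc j) =
      (if v < 0 then 2 * zrec x j else if v < 1/3 then 2 * zrec x j + v else 2 * zrec x j + 1/3)"
    unfolding zrec.simps(2) Let_def d using bounds by (auto simp: v_def)
  have z2: "2 * zrec x j = 2^(Suc j) * \<theta> - 1/6 + (2 * \<epsilon> - 1/6) + 2^(Suc j) * of_int m"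
    unfolding z by (simp add: algebra_simps)
  consider "v < 0" | "0 \<le> v" "v < 1/3" | "1/3 \<le> v"
    by linarith
  then show ?case
  proof cases
    case 1
    then have "\<bar>2 * \<epsilon> - 1/6\<bar> \<le> 1/6"
      using bounds unfolding v_def abs_le_iff by linarith
    with 1 show ?thesis
      unfolding step z2 by auto
  next
    case 2
    then have "zrec x (Suc j) = 2^(Suc j) * \<theta> - 1/6 + e + 2^(Suc j) * of_int m"
      unfolding step z2 v_def by (simp add: algebra_simps)
    with e show ?thesis
      by (intro exI[of _ e] exI[of _ m]) simp
  next
    case 3
    then have "\<bar>2 * \<epsilon> + 1/6\<bar> \<le> 1/6"
      using bounds unfolding v_def abs_le_iff by linarith
    moreover have "zrec x (Suc j) = 2^(Suc j) * \<theta> - 1/6 + (2 * \<epsilon> + 1/6) + 2^(Suc j) * of_int m"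
      using 3 bounds unfolding step z2 v_def by (simp add: algebra_simps)
    ultimately show ?thesis
      by blast
  qed
qed

lemma theta_hat_infidelity:
  assumes l: "l \<ge> 1"
    and near: "\<And>k. 1 \<le> k \<Longrightarrow> k \<le> l \<Longrightarrow> near_mod1 (1/6) (tval N (Nx k) (Ny k)) (2^(k-1) * \<theta>)"
  shows "1 - fidelity (Umat (theta_hat l N Nx Ny)) (Umat \<theta>) \<le> pi\<^sup>2 / (9 * 4^l)"
proof -
  define x where "x = (\<lambda>k. rmod (tval N (Nx k) (Ny k) - 1/6) 1)"
  have "near_mod1 (1/6) (x k) (2^(k-1) * \<theta> - 1/6)" if "1 \<le> k" "k \<le> Suc (l - 1)" for k
    unfolding x_def by (rule near_mod1_rmod_shift, rule near) (use that l in auto)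
  then obtain \<epsilon> m where \<epsilon>: "\<bar>\<epsilon>\<bar> \<le> 1/6"
    and z: "zrec x (l - 1) = 2^(l-1) * \<theta> - 1/6 + \<epsilon> + 2^(l-1) * of_int m"
    using zrec_error[of "l - 1" x \<theta>] by blast
  define q where "q = (zrec x (l - 1) + 1/6) / 2^(l-1)"
  have "theta_hat l N Nx Ny = q - of_int \<lfloor>q\<rfloor>"
    unfolding theta_hat_def Let_def q_def x_def by (simp add: rmod_def)
  also have "\<dots> = \<theta> + \<epsilon> / 2^(l-1) + of_int (m - \<lfloor>q\<rfloor>)"
    unfolding q_def z by (simp add: field_simps)
  finally have "1 - fidelity (Umat (theta_hat l N Nx Ny)) (Umat \<theta>) \<le> (pi * (\<epsilon> / 2^(l-1)))\<^sup>2"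
    by (rule one_minus_fidelity_Umat_le)
  also have "\<dots> = pi\<^sup>2 * (4 * \<epsilon>\<^sup>2) / 4^l"
  proof -
    have "(2::real)^l = 2 * 2^(l-1)"
      using l by (cases l) auto
    moreover have "(4::real)^l = (2^l)\<^sup>2"
      unfolding power2_eq_square power_mult_distrib[symmetric] by simp
    ultimately have "(4::real)^l = 4 * (2^(l-1))\<^sup>2"
      by (simp add: power_mult_distrib)
    then show ?thesis
      by (simp add: power_divide power_mult_distrib)
  qed
  also have "\<dots> \<le> pi\<^sup>2 * (4 * (1/6)\<^sup>2) / 4^l"
  proof -
    have "\<epsilon>\<^sup>2 \<le> (1/6)\<^sup>2"
      using \<epsilon> by (metis abs_ge_zero power2_abs power_mono)
    then show ?thesis
      by (intro divide_right_mono mult_left_mono) auto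
  qed
  also have "\<dots> = pi\<^sup>2 / (9 * 4^l)"
    by (simp add: power2_eq_square)
  finally show ?thesis .
qed

lemma near_mod1_of_cos_gt_half:
  assumes "cos y > 1/2"
  shows "near_mod1 (1/6) (y / (2 * pi)) 0"
proof -
  define k where "k = \<lfloor>(y + pi) / (2 * pi)\<rfloor>"
  define w where "w = y - 2 * pi * of_int k"
  have "of_int k \<le> (y + pi) / (2 * pi)" "(y + pi) / (2 * pi) < of_int k + 1"
    unfolding k_def by linarith+
  then have w: "-pi \<le> w" "w < pi"
    unfolding w_def by (simp_all add: field_simps)
  have "cos \<bar>w\<bar> = cos y"
    unfolding w_def by (simp add: abs_if cos_diff)
  moreover have "\<bar>w\<bar> \<le> pi"
    using w by linarith
  ultimately have "\<not> pi / 3 \<le> \<bar>w\<bar>"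
    using cos_monotone_0_pi_le[of "pi / 3" "\<bar>w\<bar>"] assms cos_60 by auto
  then have "\<bar>w / (2 * pi)\<bar> < 1/6"
    by (simp add: abs_divide)
  moreover have "y / (2 * pi) = 0 + w / (2 * pi) + of_int k"
    unfolding w_def by (simp add: field_simps)
  ultimately show ?thesis
    unfolding near_mod1_def by blast
qed

lemma near_mod1_Arg2pi:
  assumes "(X - cos \<phi>)\<^sup>2 + (Y - sin \<phi>)\<^sup>2 < 3/4"
  shows "near_mod1 (1/6) (Arg2pi (Complex X Y) / (2 * pi)) (\<phi> / (2 * pi))"
proof -
  define A where "A = Arg2pi (Complex X Y)"
  define r where "r = cmod (Complex X Y)"
  define p where "p = X * cos \<phi> + Y * sin \<phi>"
  have polar: "r * cos A = X" "r * sin A = Y"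
    unfolding r_def A_def using cos_Arg2pi[of "Complex X Y"] sin_Arg2pi[of "Complex X Y"] by auto
  have "r\<^sup>2 = X\<^sup>2 + Y\<^sup>2"
    unfolding r_def by (simp add: cmod_power2)
  moreover have "(X - cos \<phi>)\<^sup>2 + (Y - sin \<phi>)\<^sup>2 = X\<^sup>2 + Y\<^sup>2 - 2 * p + ((sin \<phi>)\<^sup>2 + (cos \<phi>)\<^sup>2)"
    unfolding p_def power2_diff by simp
  ultimately have "(X - cos \<phi>)\<^sup>2 + (Y - sin \<phi>)\<^sup>2 = r\<^sup>2 - 2 * p + 1"
    by simp
  then have lt: "r\<^sup>2 < 2 * p - 1/4"
    using assms by simp
  then have p: "p > 0"
    using zero_le_power2[of r] by linarith
  have "2 * p - 1/4 \<le> (2 * p)\<^sup>2"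
    using zero_le_power2[of "2 * p - 1/2"] by (simp add: power2_eq_square algebra_simps)
  with lt have "r\<^sup>2 < (2 * p)\<^sup>2"
    by linarith
  with p have "r < 2 * p"
    by (auto intro: power2_less_imp_less)
  moreover have rcos: "r * cos (A - \<phi>) = p"
    unfolding cos_diff p_def polar[symmetric] by (simp add: algebra_simps)
  ultimately have "r * 1 < r * (2 * cos (A - \<phi>))"
    by simp
  moreover have "r > 0"
    using rcos p by (cases "r = 0") (auto simp: r_def)
  ultimately have "cos (A - \<phi>) > 1/2"
    by (simp only: mult_less_cancel_left_pos)
  then obtain e k where "\<bar>e\<bar> < 1/6" "(A - \<phi>) / (2 * pi) = 0 + e + of_int k"
    using near_mod1_of_cos_gt_half unfolding near_mod1_def by blast
  moreover have "A / (2 * pi) = \<phi> / (2 * pi) + (A - \<phi>) / (2 * pi)"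
    by (simp add: diff_divide_distrib)
  ultimately show ?thesis
    unfolding A_def near_mod1_def by auto
qed

lemma near_mod1_tval:
  assumes N: "N > 0" and s: "s\<^sup>2 \<le> 3/32"
    and nx: "\<bar>real nx / real N - (1 + cos \<phi>) / 2\<bar> < s"
    and ny: "\<bar>real ny / real N - (1 + sin \<phi>) / 2\<bar> < s"
  shows "near_mod1 (1/6) (tval N nx ny) (\<phi> / (2 * pi))"
proof -
  define X where "X = 2 * real nx / real N - 1"
  define Y where "Y = 2 * real ny / real N - 1"
  have X: "X - cos \<phi> = 2 * (real nx / real N - (1 + cos \<phi>) / 2)"
    and Y: "Y - sin \<phi> = 2 * (real ny / real N - (1 + sin \<phi>) / 2)"
    unfolding X_def Y_def using N by (simp_all add: field_simps)
  have "\<bar>X - cos \<phi>\<bar> < 2 * s" "\<bar>Y - sin \<phi>\<bar> < 2 * s"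
    unfolding X Y abs_mult using nx ny by simp_all
  then have "(X - cos \<phi>)\<^sup>2 < (2 * s)\<^sup>2" "(Y - sin \<phi>)\<^sup>2 < (2 * s)\<^sup>2"
    by (metis abs_ge_zero power2_abs power_strict_mono zero_less_numeral pos2)+
  with s have "(X - cos \<phi>)\<^sup>2 + (Y - sin \<phi>)\<^sup>2 < 3/4"
    by (simp add: power_mult_distrib)
  then have "near_mod1 (1/6) (rmod (Arg2pi (Complex X Y) / (2 * pi) - 0) 1) (\<phi> / (2 * pi) - 0)"
    by (intro near_mod1_rmod_shift near_mod1_Arg2pi)
  then show ?thesis
    unfolding tval_def atan2_def X_def Y_def by (simp add: rmod_div)
qed

lemma expectation_le_bound_plus_prob:
  fixes M :: "'a pmf" and g :: "'a \<Rightarrow> real"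
  assumes g01: "\<And>\<omega>. 0 \<le> g \<omega> \<and> g \<omega> \<le> 1" and gA: "\<And>\<omega>. \<omega> \<in> A \<Longrightarrow> g \<omega> \<le> B" and B: "B \<ge> 0"
  shows "measure_pmf.expectation M g \<le> B + measure_pmf.prob M (- A)"
proof -
  have "measure_pmf.expectation M g \<le> measure_pmf.expectation M (\<lambda>\<omega>. B + indicator (- A) \<omega>)"
  proof (rule integral_mono)
    show "integrable M g"
      by (rule measure_pmf.integrable_const_bound[where B = 1]) (use g01 in auto)
    show "integrable M (\<lambda>\<omega>. B + indicator (- A) \<omega>)"
      by (rule measure_pmf.integrable_const_bound[where B = "B + 1"]) (use B in \<open>auto simp: indicator_def\<close>)
    show "g \<omega> \<le> B + indicator (- A) \<omega>" for \<omega>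
      using g01[of \<omega>] gA[of \<omega>] B by (cases "\<omega> \<in> A") auto
  qed
  also have "\<dots> = B + measure_pmf.prob M (- A)"
    by (subst Bochner_Integration.integral_add)
       (auto intro: measure_pmf.integrable_const_bound[where B = 1])
  finally show ?thesis .
qed

lemma map_pmf_fst_counts_pmf:
  assumes "k \<in> {1..l}"
  shows "map_pmf (\<lambda>\<omega>. fst \<omega> k) (counts_pmf l N \<theta>) = binomial_pmf N ((1 + cos (2 * pi * 2^(k-1) * \<theta>)) / 2)"
proof -
  have "map_pmf (\<lambda>\<omega>. fst \<omega> k) (counts_pmf l N \<theta>) = map_pmf (\<lambda>f. f k) (map_pmf fst (counts_pmf l N \<theta>))"
    by (simp add: pmf.map_comp o_def)
  then show ?thesis
    unfolding counts_pmf_def map_fst_pair_pmf Pi_pmf_component[OF finite_atLeastAtMost] using assms by simp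
qed

lemma map_pmf_snd_counts_pmf:
  assumes "k \<in> {1..l}"
  shows "map_pmf (\<lambda>\<omega>. snd \<omega> k) (counts_pmf l N \<theta>) = binomial_pmf N ((1 + sin (2 * pi * 2^(k-1) * \<theta>)) / 2)"
proof -
  have "map_pmf (\<lambda>\<omega>. snd \<omega> k) (counts_pmf l N \<theta>) = map_pmf (\<lambda>f. f k) (map_pmf snd (counts_pmf l N \<theta>))"
    by (simp add: pmf.map_comp o_def)
  then show ?thesis
    unfolding counts_pmf_def map_snd_pair_pmf Pi_pmf_component[OF finite_atLeastAtMost] using assms by simp
qed

lemma prob_binomial_deviation_le:
  assumes law: "map_pmf f M = binomial_pmf N ((1 + c) / 2)" and "N > 0" "s \<ge> 0" "\<bar>c\<bar> \<le> 1"
  shows "measure_pmf.prob M {\<omega>. s \<le> \<bar>real (f \<omega>) / real N - (1 + c) / 2\<bar>} \<le> 2 * exp (- 2 * real N * s\<^sup>2)"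
proof -
  have "binomial_distribution ((1 + c) / 2)"
    unfolding binomial_distribution_def using assms by auto
  then have "measure_pmf.prob (map_pmf f M) {x. s \<le> \<bar>real x / real N - (1 + c) / 2\<bar>} \<le> 2 * exp (- 2 * real N * s\<^sup>2)"
    unfolding law using binomial_distribution.prob_abs_ge' assms by simp
  then show ?thesis
    by (simp add: measure_map_pmf vimage_def)
qed

definition accurate_counts :: "nat \<Rightarrow> nat \<Rightarrow> real \<Rightarrow> real \<Rightarrow> ((nat \<Rightarrow> nat) \<times> (nat \<Rightarrow> nat)) set" where
  "accurate_counts l N \<theta> s = {(Nx, Ny). \<forall>k\<in>{1..l}.
     \<bar>real (Nx k) / real N - (1 + cos (2 * pi * 2^(k-1) * \<theta>)) / 2\<bar> < s \<and>
     \<bar>real (Ny k) / real N - (1 + sin (2 * pi * 2^(k-1) * \<theta>)) / 2\<bar> < s}"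

lemma prob_not_accurate_counts:
  assumes N: "N > 0" and s: "s \<ge> 0"
  shows "measure_pmf.prob (counts_pmf l N \<theta>) (- accurate_counts l N \<theta> s) \<le> 4 * real l * exp (- 2 * real N * s\<^sup>2)"
proof -
  define M where "M = counts_pmf l N \<theta>"
  define phi where "phi k = 2 * pi * 2^(k-1) * \<theta>" for k :: nat
  define Ax where "Ax k = {\<omega> :: (nat \<Rightarrow> nat) \<times> (nat \<Rightarrow> nat). s \<le> \<bar>real (fst \<omega> k) / real N - (1 + cos (phi k)) / 2\<bar>}" for k
  define Ay where "Ay k = {\<omega> :: (nat \<Rightarrow> nat) \<times> (nat \<Rightarrow> nat). s \<le> \<bar>real (snd \<omega> k) / real N - (1 + sin (phi k)) / 2\<bar>}" for k
  have "- accurate_counts l N \<theta> s = (\<Union>k\<in>{1..l}. Ax k \<union> Ay k)"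
    unfolding accurate_counts_def Ax_def Ay_def phi_def by force
  then have "measure_pmf.prob M (- accurate_counts l N \<theta> s) \<le> (\<Sum>k\<in>{1..l}. measure_pmf.prob M (Ax k \<union> Ay k))"
    by (simp add: measure_UNION_le)
  also have "\<dots> \<le> (\<Sum>k\<in>{1..l}. 4 * exp (- 2 * real N * s\<^sup>2))"
  proof (rule sum_mono)
    fix k assume k: "k \<in> {1..l}"
    have "measure_pmf.prob M (Ax k) \<le> 2 * exp (- 2 * real N * s\<^sup>2)"
      unfolding Ax_def phi_def M_def
      by (rule prob_binomial_deviation_le[OF map_pmf_fst_counts_pmf[OF k] N s]) simp
    moreover have "measure_pmf.prob M (Ay k) \<le> 2 * exp (- 2 * real N * s\<^sup>2)"
      unfolding Ay_def phi_def M_def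
      by (rule prob_binomial_deviation_le[OF map_pmf_snd_counts_pmf[OF k] N s]) simp
    ultimately show "measure_pmf.prob M (Ax k \<union> Ay k) \<le> 4 * exp (- 2 * real N * s\<^sup>2)"
      using measure_Un_le[of "Ax k" M "Ay k"] by simp
  qed
  finally show ?thesis
    unfolding M_def by simp
qed

lemma infidelity_of_accurate_counts:
  assumes l: "l \<ge> 1" and N: "N > 0" and acc: "(Nx, Ny) \<in> accurate_counts l N \<theta> (sqrt (3/32))"
  shows "1 - fidelity (Umat (theta_hat l N Nx Ny)) (Umat \<theta>) \<le> pi\<^sup>2 / (9 * 4^l)"
proof (rule theta_hat_infidelity[OF l])
  fix k assume "1 \<le> k" "k \<le> l"
  then have "near_mod1 (1/6) (tval N (Nx k) (Ny k)) (2 * pi * 2^(k-1) * \<theta> / (2 * pi))"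
    using acc unfolding accurate_counts_def by (intro near_mod1_tval[OF N]) auto
  then show "near_mod1 (1/6) (tval N (Nx k) (Ny k)) (2^(k-1) * \<theta>)"
    by simp
qed

lemma expected_infidelity_le:
  assumes l: "l \<ge> 1" and N: "N > 0"
  shows "1 - measure_pmf.expectation (counts_pmf l N \<theta>)
           (\<lambda>(Nx, Ny). fidelity (Umat (theta_hat l N Nx Ny)) (Umat \<theta>))
         \<le> pi\<^sup>2 / (9 * 4^l) + 4 * real l * exp (- 3 * real N / 16)"
proof -
  define M where "M = counts_pmf l N \<theta>"
  define F where "F = (\<lambda>(Nx, Ny). fidelity (Umat (theta_hat l N Nx Ny)) (Umat \<theta>))"
  define A where "A = accurate_counts l N \<theta> (sqrt (3/32))"
  have F01: "0 \<le> F \<omega> \<and> F \<omega> \<le> 1" for \<omega>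
    unfolding F_def by (simp add: fidelity_Umat_bounds split: prod.split)
  have "measure_pmf.expectation M (\<lambda>\<omega>. 1 - F \<omega>) \<le> pi\<^sup>2 / (9 * 4^l) + measure_pmf.prob M (- A)"
    by (rule expectation_le_bound_plus_prob)
       (use F01 infidelity_of_accurate_counts[OF l N] in \<open>auto simp: F_def A_def\<close>)
  moreover have "measure_pmf.expectation M (\<lambda>\<omega>. 1 - F \<omega>) = 1 - measure_pmf.expectation M F"
    by (subst Bochner_Integration.integral_diff)
       (auto intro!: measure_pmf.integrable_const_bound[where B = 1] simp: F01)
  moreover have "measure_pmf.prob M (- A) \<le> 4 * real l * exp (- 3 * real N / 16)"
    using prob_not_accurate_counts[OF N, of "sqrt (3/32)" l \<theta>] unfolding M_def A_def by simp
  ultimately show ?thesis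
    unfolding M_def F_def by linarith
qed

lemma Nmeas_bounds:
  assumes l: "l \<ge> 1"
  shows "(534/100) * ln (4 * real l * 2^(2*l)) \<le> real (Nmeas l)" "real (Nmeas l) \<le> 35 * real l"
proof -
  define c where "c = (534/100) * ln (4 * real l * 2^(2*l))"
  have "ln (4 * real l * 2^(2*l)) = ln (4 * real l) + real (2 * l) * ln 2"
    using l by (simp add: ln_mult ln_realpow)
  moreover have "ln (4 * real l) \<le> 4 * real l" "ln (2::real) \<le> 1" "0 \<le> ln (4 * real l)"
    using ln_le_minus_one[of "4 * real l"] ln_le_minus_one[of 2] l by auto
  ultimately have "0 \<le> ln (4 * real l * 2^(2*l))" "ln (4 * real l * 2^(2*l)) \<le> 6 * real l"
    using mult_left_mono[of "ln 2" 1 "real (2 * l)"] by auto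
  then have "0 \<le> c" "c \<le> 33 * real l"
    unfolding c_def by auto
  moreover have "real (Nmeas l) = of_int \<lceil>c\<rceil>"
    using \<open>0 \<le> c\<close> unfolding Nmeas_def c_def by simp
  ultimately show "c \<le> real (Nmeas l)" "real (Nmeas l) \<le> 35 * real l"
    using l by (simp_all add: le_of_int_ceiling) linarith
qed

lemma Nmeas_pos:
  assumes l: "l \<ge> 1"
  shows "Nmeas l > 0"
proof -
  have "4 * 1 * 1 \<le> 4 * real l * 2^(2*l)"
    using l by (intro mult_mono) auto
  then have "0 < (534/100) * ln (4 * real l * 2^(2*l))"
    by simp
  then show ?thesis
    using Nmeas_bounds(1)[OF l] by simp
qed

text \<open>The constant \<open>5.34 \<ge> 16/3\<close> in \<open>Nmeas\<close> is what makes \<open>3N/16 \<ge> ln (4 l 4^l)\<close>.\<close>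
lemma failure_term_le:
  assumes l: "l \<ge> 1"
  shows "4 * real l * exp (- 3 * real (Nmeas l) / 16) \<le> 1 / 4^l"
proof -
  define M :: real where "M = 4 * real l * 2^(2*l)"
  have M: "M > 0"
    unfolding M_def using l by simp
  have "exp (- 3 * real (Nmeas l) / 16) \<le> exp (- ln M)"
    using Nmeas_bounds(1)[OF l] M unfolding M_def by simp
  also have "\<dots> = 1 / M"
    using M by (simp add: exp_minus inverse_eq_divide)
  finally have "4 * real l * exp (- 3 * real (Nmeas l) / 16) \<le> 4 * real l * (1 / M)"
    by (intro mult_left_mono) auto
  also have "\<dots> = 1 / 4^l"
    unfolding M_def using l by (simp add: power_mult)
  finally show ?thesis .
qed

lemma error_terms_le:
  assumes l: "l \<ge> 1"
  shows "pi\<^sup>2 / (9 * 4^l) + 4 * real l * exp (- 3 * real (Nmeas l) / 16) \<le> 3 / 4^l"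
proof -
  have "pi\<^sup>2 \<le> 4\<^sup>2"
    using pi_less_4 by (intro power_mono) auto
  then have "pi\<^sup>2 / (9 * 4^l) \<le> 16 / (9 * 4^l)"
    by (intro divide_right_mono) auto
  moreover have "16 / (9 * 4^l) + 1 / 4^l \<le> (3::real) / 4^l"
    by (simp add: field_simps)
  ultimately show ?thesis
    using failure_term_le[OF l] by linarith
qed

lemma ln_nuses_div_nuses_ge:
  assumes l: "l \<ge> 1"
  shows "1 / (140 * 2^l) \<le> ln (real (nuses l)) / real (nuses l)"
proof -
  define n where "n = real (nuses l)"
  have N: "1 \<le> real (Nmeas l)" "real (Nmeas l) \<le> 35 * real l"
    using Nmeas_pos[OF l] Nmeas_bounds(2)[OF l] by auto
  have p2: "(2::real)^l \<ge> 2"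
    using l by (metis power_one_right power_increasing one_le_numeral)
  have n: "n = 2 * real (Nmeas l) * (2^l - 1)"
    unfolding n_def nuses_def using p2 by (simp add: of_nat_diff)
  have "2 * 1 * (2^l - 1) \<le> n"
    unfolding n using N p2 by (intro mult_right_mono mult_left_mono) auto
  then have n_lo: "2^l \<le> n"
    using p2 by simp
  have "n \<le> 2 * (35 * real l) * 2^l"
    unfolding n using N p2 by (intro mult_mono) auto
  then have n_hi: "n \<le> 70 * real l * 2^l"
    by simp
  have n_pos: "n > 0"
    using n_lo p2 by linarith
  have "real l * (2/3) \<le> real l * ln 2"
    using ln2_ge_two_thirds by (intro mult_left_mono) auto
  also have "\<dots> = ln (2^l)"
    by (simp add: ln_realpow)
  also have "\<dots> \<le> ln n"
    using n_lo n_pos by (subst ln_le_cancel_iff) auto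
  finally have ln_n: "real l * (2/3) \<le> ln n" .
  have "1 / (140 * 2^l) \<le> (real l * (2/3)) / (70 * real l * 2^l)"
    using l by (simp add: field_simps)
  also have "\<dots> \<le> ln n / n"
    by (rule frac_le) (use ln_n n_hi n_lo p2 l in auto)
  finally show ?thesis
    unfolding n_def .
qed

theorem mainTheorem5:
  "\<exists>C>0. \<forall>l::nat. l \<ge> 1 \<longrightarrow> (\<forall>\<theta>::real. 0 \<le> \<theta> \<and> \<theta> < 1 \<longrightarrow>
     1 - measure_pmf.expectation (counts_pmf l (Nmeas l) \<theta>)
           (\<lambda>(Nx, Ny). fidelity (Umat (theta_hat l (Nmeas l) Nx Ny)) (Umat \<theta>))
     \<le> C * (ln (real (nuses l)) / real (nuses l))\<^sup>2)"
proof (intro exI[of _ 60000] conjI allI impI)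
  fix l :: nat and \<theta> :: real
  assume l: "l \<ge> 1"
  have "pi\<^sup>2 / (9 * 4^l) + 4 * real l * exp (- 3 * real (Nmeas l) / 16) \<le> 3 / 4^l"
    by (rule error_terms_le[OF l])
  also have "\<dots> \<le> 60000 * (1 / (140 * 2^l))\<^sup>2"
  proof -
    have "((2::real)^l)\<^sup>2 = 4^l"
      unfolding power2_eq_square power_mult_distrib[symmetric] by simp
    then show ?thesis
      by (simp add: power_divide power_mult_distrib field_simps)
  qed
  also have "\<dots> \<le> 60000 * (ln (real (nuses l)) / real (nuses l))\<^sup>2"
    using ln_nuses_div_nuses_ge[OF l] by (intro mult_left_mono power_mono) auto
  finally show "1 - measure_pmf.expectation (counts_pmf l (Nmeas l) \<theta>)
           (\<lambda>(Nx, Ny). fidelity (Umat (theta_hat l (Nmeas l) Nx Ny)) (Umat \<theta>))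
     \<le> 60000 * (ln (real (nuses l)) / real (nuses l))\<^sup>2"
    using expected_infidelity_le[OF l Nmeas_pos[OF l], of \<theta>] by linarith
qed simp

end
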